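(* Let $X$ be a finite $T_0$-space admitting a free action of $\mathbb{Z}_2$ by homeomorphisms. Then (for a suitable labelling of $X$) $X_M$ is a block matrix $(A_{i,j})_{i,j=1,2}$ with blocks of size $\frac{|X|}{2}\times\frac{|X|}{2}$ such that $A_{1,1}=A_{2,2}$ and $A_{1,2}=A_{2,1}$. In particular, $\det(X_M)=\det(A_{1,1}+A_{1,2})\det(A_{1,1}-A_{1,2})$.
   Context: A finite $T_0$-space is identified with a finite poset via $x\le y$ iff $U_x\subseteq U_y$, where $U_x$ is the minimal open set containing $x$. For a labelling $X=\{x_1,\dots,x_n\}$, $X_M=(x_{i,j})$ is the $n\times n$ matrix with $x_{i,j}=0$ if $x_i\le x_j$ and $x_{i,j}=1$ otherwise. *)

theory Defs
  imports "HOL-Analysis.Abstract_Topological_Spaces" "Jordan_Normal_Form.Determinant"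
begin

definition minimal_open :: "'a topology \<Rightarrow> 'a \<Rightarrow> 'a set" where
  "minimal_open X x = \<Inter>{U. openin X U \<and> x \<in> U}"

definition spec_le :: "'a topology \<Rightarrow> 'a \<Rightarrow> 'a \<Rightarrow> bool" where
  "spec_le X x y \<longleftrightarrow> minimal_open X x \<subseteq> minimal_open X y"

definition space_matrix :: "'a topology \<Rightarrow> (nat \<Rightarrow> 'a) \<Rightarrow> nat \<Rightarrow> int mat" where
  "space_matrix X lab n = mat n n (\<lambda>(i, j). if spec_le X (lab i) (lab j) then 0 else 1)"

end

theory Submission
  imports Defs
begin

text \<open>A homeomorphism preserves and reflects the specialization order, so labelling a transversal
  S of the orbits of \<tau> first and then \<tau>(S) in the same order makes the lower half of X_M a copy
  of the upper half with its two column blocks swapped. Conjugating the block matrix by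
  [[I,0],[-I,I]] and [[I,0],[I,I]] (both of determinant 1) yields [[A+B,B],[0,A-B]].\<close>

lemma spec_le_iff: "spec_le X x y \<longleftrightarrow> (\<forall>U. openin X U \<and> y \<in> U \<longrightarrow> x \<in> U)"
  unfolding spec_le_def minimal_open_def by blast

lemma spec_le_continuous_map:
  assumes "continuous_map X Y f" "y \<in> topspace X" "spec_le X x y"
  shows "spec_le Y (f x) (f y)"
  unfolding spec_le_iff
proof (intro allI impI)
  fix U assume U: "openin Y U \<and> f y \<in> U"
  then have "openin X {z \<in> topspace X. f z \<in> U}"
    using openin_continuous_map_preimage[OF assms(1)] by blast
  moreover have "y \<in> {z \<in> topspace X. f z \<in> U}" using U assms(2) by auto
  ultimately show "f x \<in> U" using assms(3) unfolding spec_le_iff by blast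
qed

lemma spec_le_homeomorphic_map_iff:
  assumes "homeomorphic_map X Y f" "x \<in> topspace X" "y \<in> topspace X"
  shows "spec_le Y (f x) (f y) \<longleftrightarrow> spec_le X x y"
proof
  obtain g where "homeomorphic_maps X Y f g"
    using assms(1) homeomorphic_map_maps by blast
  then have g: "continuous_map Y X g" "g (f x) = x" "g (f y) = y" and "f y \<in> topspace Y"
    using assms(2,3) by (auto simp: homeomorphic_maps_def continuous_map_def)
  assume "spec_le Y (f x) (f y)"
  from spec_le_continuous_map[OF g(1) \<open>f y \<in> topspace Y\<close> this] show "spec_le X x y"
    using g(2,3) by simp
next
  assume "spec_le X x y"
  then show "spec_le Y (f x) (f y)"
    by (rule spec_le_continuous_map[OF homeomorphic_imp_continuous_map[OF assms(1)] assms(3)])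
qed

lemma fixpoint_free_involution_transversal:
  assumes maps: "\<tau> ` T \<subseteq> T" and inv: "\<forall>x\<in>T. \<tau> (\<tau> x) = x" and free: "\<forall>x\<in>T. \<tau> x \<noteq> x"
  obtains S where "S \<subseteq> T" "S \<inter> \<tau> ` S = {}" "S \<union> \<tau> ` S = T"
proof -
  define rep where "rep x = (SOME y. y \<in> {x, \<tau> x})" for x
  have rep_in: "rep x \<in> {x, \<tau> x}" for x
    unfolding rep_def by (rule someI_ex) auto
  have rep_tau: "rep (\<tau> x) = rep x" if "x \<in> T" for x
  proof -
    have "{\<tau> x, \<tau> (\<tau> x)} = {x, \<tau> x}" using inv that by auto
    then show ?thesis unfolding rep_def by simp
  qed
  define S where "S = {x \<in> T. rep x = x}"
  have "S \<inter> \<tau> ` S = {}"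
  proof (rule ccontr)
    assume "S \<inter> \<tau> ` S \<noteq> {}"
    then obtain y where "y \<in> S" "\<tau> y \<in> S" by auto
    then show False using rep_tau free by (metis (mono_tags, lifting) S_def mem_Collect_eq)
  qed
  moreover have "T \<subseteq> S \<union> \<tau> ` S"
  proof
    fix x assume x: "x \<in> T"
    show "x \<in> S \<union> \<tau> ` S"
    proof (cases "rep x = x")
      case True
      then show ?thesis using x by (simp add: S_def)
    next
      case False
      then have "rep (\<tau> x) = \<tau> x" using rep_in[of x] rep_tau[OF x] by auto
      then have "\<tau> x \<in> S" using maps x by (auto simp: S_def)
      then show ?thesis using inv x by (metis UnI2 image_eqI)
    qed
  qed
  moreover have "S \<subseteq> T" by (auto simp: S_def)
  moreover have "\<tau> ` S \<subseteq> T" using \<open>S \<subseteq> T\<close> maps by blast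
  ultimately show ?thesis using that by (metis Un_least subset_antisym)
qed

lemma fixpoint_free_involution_labelling:
  assumes "finite T" and maps: "\<tau> ` T \<subseteq> T"
    and inv: "\<forall>x\<in>T. \<tau> (\<tau> x) = x" and free: "\<forall>x\<in>T. \<tau> x \<noteq> x"
  obtains m lab where "card T = 2 * m" "bij_betw lab {..<card T} T" "\<forall>i<m. lab (m + i) = \<tau> (lab i)"
proof -
  obtain S where S: "S \<subseteq> T" "S \<inter> \<tau> ` S = {}" "S \<union> \<tau> ` S = T"
    using fixpoint_free_involution_transversal[OF maps inv free] by blast
  have "finite S" using S(1) \<open>finite T\<close> finite_subset by blast
  define m where "m = card S"
  obtain f where f: "bij_betw f {..<m} S"
    using ex_bij_betw_nat_finite[OF \<open>finite S\<close>] by (auto simp: m_def atLeast0LessThan)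
  have inj: "inj_on \<tau> S" using S(1) inv by (metis inj_on_def subsetD)
  have card: "card T = 2 * m"
    using card_Un_disjoint[OF \<open>finite S\<close> finite_imageI[OF \<open>finite S\<close>] S(2)] card_image[OF inj] S(3)
    by (simp add: m_def)
  define lab where "lab i = (if i < m then f i else \<tau> (f (i - m)))" for i
  have first_half: "bij_betw lab {..<m} S"
    using f by (rule bij_betw_cong[THEN iffD1, rotated]) (simp add: lab_def)
  have "bij_betw (\<lambda>i. \<tau> (f (i - m))) {m..<2*m} (\<tau> ` S)"
  proof -
    have "bij_betw (\<lambda>i. i - m) {m..<2*m} {..<m}"
      by (rule bij_betwI[where g = "\<lambda>i. i + m"]) auto
    then show ?thesis
      using bij_betw_trans[OF _ bij_betw_trans[OF f inj_on_imp_bij_betw[OF inj]]]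
      by (simp add: comp_def)
  qed
  then have second_half: "bij_betw lab {m..<2*m} (\<tau> ` S)"
    by (rule bij_betw_cong[THEN iffD1, rotated]) (simp add: lab_def)
  have "{..<m} \<union> {m..<2*m} = {..<card T}" using card by auto
  then have "bij_betw lab {..<card T} T"
    using bij_betw_combine[OF first_half second_half S(2)] S(3) by simp
  moreover have "\<forall>i<m. lab (m + i) = \<tau> (lab i)" by (simp add: lab_def)
  ultimately show ?thesis using that card by blast
qed

lemma mat_eq_four_block_mat_swap:
  assumes "\<forall>i<m. \<forall>j<m. g (m + i) (m + j) = g i j \<and> g (m + i) j = g i (m + j)"
  shows "mat (2 * m) (2 * m) (\<lambda>(i, j). g i j) =
    four_block_mat (mat m m (\<lambda>(i, j). g i j)) (mat m m (\<lambda>(i, j). g i (m + j)))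
                   (mat m m (\<lambda>(i, j). g i (m + j))) (mat m m (\<lambda>(i, j). g i j))"
    (is "_ = four_block_mat ?A ?B ?B ?A")
proof (rule eq_matI)
  fix i j assume "i < dim_row (four_block_mat ?A ?B ?B ?A)" "j < dim_col (four_block_mat ?A ?B ?B ?A)"
  then have ij: "i < 2 * m" "j < 2 * m" by auto
  show "mat (2 * m) (2 * m) (\<lambda>(i, j). g i j) $$ (i, j) = four_block_mat ?A ?B ?B ?A $$ (i, j)"
    using assms[rule_format, of "i - m" "j - m"] assms[rule_format, of "i - m" j] ij
    by (cases "i < m"; cases "j < m") auto
qed auto

lemma det_four_block_mat_symmetric_blocks:
  fixes A B :: "'a :: idom mat"
  assumes A: "A \<in> carrier_mat m m" and B: "B \<in> carrier_mat m m"
  shows "det (four_block_mat A B B A) = det (A + B) * det (A - B)"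
proof -
  let ?M = "four_block_mat A B B A"
  let ?L = "four_block_mat (1\<^sub>m m) (0\<^sub>m m m) (- 1\<^sub>m m) (1\<^sub>m m) :: 'a mat"
  let ?R = "four_block_mat (1\<^sub>m m) (0\<^sub>m m m) (1\<^sub>m m) (1\<^sub>m m) :: 'a mat"
  have M: "?M \<in> carrier_mat (m + m) (m + m)" using A B by auto
  have L: "?L \<in> carrier_mat (m + m) (m + m)" and R: "?R \<in> carrier_mat (m + m) (m + m)" by auto
  have "det ?L = 1" "det ?R = 1"
    by (subst det_four_block_mat_upper_right_zero[of _ m _ m], auto)+
  have "?M * ?R = four_block_mat (A + B) B (B + A) A"
    using A B by (subst mult_four_block_mat[OF A B B A]) auto
  then have LMR: "?L * (?M * ?R) = four_block_mat (A + B) B (0\<^sub>m m m) (A - B)"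
    using A B by (simp, subst mult_four_block_mat[of _ m m _ m _ m]) auto
  have "det (?L * (?M * ?R)) = det ?L * (det ?M * det ?R)"
    using det_mult[OF L mult_carrier_mat[OF M R]] det_mult[OF M R] by simp
  then have "det ?M = det (four_block_mat (A + B) B (0\<^sub>m m m) (A - B))"
    using \<open>det ?L = 1\<close> \<open>det ?R = 1\<close> LMR by simp
  also have "\<dots> = det (A + B) * det (A - B)"
    using A B by (intro det_four_block_mat_lower_left_zero) auto
  finally show ?thesis .
qed

theorem mainTheorem18:
  fixes X :: "'a topology" and \<tau> :: "'a \<Rightarrow> 'a"
  assumes "finite (topspace X)"
    and "t0_space X"
    and "homeomorphic_map X X \<tau>"
    and "\<forall>x \<in> topspace X. \<tau> (\<tau> x) = x"
    and "\<forall>x \<in> topspace X. \<tau> x \<noteq> x"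
  shows "\<exists>lab m A B.
           bij_betw lab {..<card (topspace X)} (topspace X) \<and>
           card (topspace X) = 2 * m \<and>
           A \<in> carrier_mat m m \<and> B \<in> carrier_mat m m \<and>
           space_matrix X lab (card (topspace X)) = four_block_mat A B B A \<and>
           det (space_matrix X lab (card (topspace X))) = det (A + B) * det (A - B)"
proof -
  have maps: "\<tau> ` topspace X \<subseteq> topspace X"
    using assms(3) homeomorphic_imp_continuous_map continuous_map_image_subset_topspace by blast
  obtain m lab where card: "card (topspace X) = 2 * m"
    and lab: "bij_betw lab {..<card (topspace X)} (topspace X)" "\<forall>i<m. lab (m + i) = \<tau> (lab i)"
    using fixpoint_free_involution_labelling[OF assms(1) maps assms(4,5)] by blast
  define g where "g i j = (if spec_le X (lab i) (lab j) then 0 else 1 :: int)" for i j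
  have lab_in: "lab i \<in> topspace X" if "i < 2 * m" for i
    using lab(1) card that bij_betwE by fastforce
  have spec_le_tau: "spec_le X (\<tau> x) (\<tau> y) \<longleftrightarrow> spec_le X x y"
    if "x \<in> topspace X" "y \<in> topspace X" for x y
    using spec_le_homeomorphic_map_iff[OF assms(3) that] .
  have swap: "\<forall>i<m. \<forall>j<m. g (m + i) (m + j) = g i j \<and> g (m + i) j = g i (m + j)"
  proof (intro allI impI)
    fix i j assume "i < m" "j < m"
    then have ij: "lab i \<in> topspace X" "lab j \<in> topspace X" using lab_in by auto
    then have "\<tau> (lab j) \<in> topspace X" "\<tau> (\<tau> (lab j)) = lab j" using maps assms(4) by auto
    then show "g (m + i) (m + j) = g i j \<and> g (m + i) j = g i (m + j)"
      using ij lab(2) \<open>i < m\<close> \<open>j < m\<close> spec_le_tau[of "lab i" "\<tau> (lab j)"] spec_le_tau[of "lab i" "lab j"]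
      by (simp add: g_def)
  qed
  define A where "A = mat m m (\<lambda>(i, j). g i j)"
  define B where "B = mat m m (\<lambda>(i, j). g i (m + j))"
  have "space_matrix X lab (card (topspace X)) = four_block_mat A B B A"
    unfolding space_matrix_def card g_def[symmetric] A_def B_def
    by (rule mat_eq_four_block_mat_swap) (rule swap)
  moreover have "A \<in> carrier_mat m m" "B \<in> carrier_mat m m"
    by (simp_all add: A_def B_def)
  ultimately show ?thesis
    using lab(1) card det_four_block_mat_symmetric_blocks
    by (intro exI[of _ lab] exI[of _ m] exI[of _ A] exI[of _ B]) simp
qed

end
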